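(* Couple the original redundancy system and the UB system described in the context so that they have the same arrival instants, types and job sizes, and assume $N_c(0)=N_c^{UB}(0)$ and $a_{cjs}(0)=a^{UB}_{cjs}(0)$ for all $c,j,s$. Then $N_c(t)\le N_c^{UB}(t)$ and $a_{cjs}(t)\ge a^{UB}_{cjs}(t)$ for all $c,j,s$ and all $t\ge0$.
   Context: Model: $K$ parallel servers $S=\{1,\ldots,K\}$ with capacities $\mu_k>0$, each serving its own queue by Processor Sharing (with $M_k$ copies present, each copy at server $k$ receives rate $\mu_k/M_k$). Jobs arrive by a Poisson process; each job independently is of type $c\subseteq S$ with probability $p_c$; $\mathcal C=\{c:p_c>0\}$, $\mathcal C(s)=\{c\in\mathcal C:s\in c\}$. Original (redundancy) system: a type-$c$ job sends identical copies (same size $b_{cj}$ for the $j$th type-$c$ job) to all servers of $c$ and departs as soon as one copy completes, the others being removed. Subsystems: $S_1=S$, $\mathcal C_1=\mathcal C$, $\mathcal C_i(s)=\mathcal C_i\cap\mathcal C(s)$, $\mathcal L_i=\arg\max_{s\in S_i}\frac{\mu_s}{\sum_{c\in\mathcal C_i(s)}p_c}$, $S_{i+1}=S\setminus\bigcup_{l\le i}\mathcal L_l$, $\mathcal C_{i+1}=\{c\in\mathcal C:c\subseteq S_{i+1}\}$; $\mathcal R(c)=\{s:\exists i,\ c\in\mathcal C_i(s),\ s\in\mathcal L_i\}$. UB system: same, except a type-$c$ job departs only when all its copies at servers in $\mathcal R(c)$ are fully served, upon which its remaining copies are removed. $N_c(t)$ ($N_c^{UB}(t)$) is the number of type-$c$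 jobs present at time $t$ in the original (UB) system, and $a_{cjs}(t)$ ($a^{UB}_{cjs}(t)$) the service attained at server $s$ by the copy of the $j$th type-$c$ job. Convention: if a job has already departed in the original system but not in the UB system, its attained service at all its servers in the original system is set equal to its size $b_{cj}$. *)

theory Defs
  imports "HOL-Analysis.Analysis"
begin

definition types :: "('s set \<Rightarrow> real) \<Rightarrow> 's set set" where
  "types p = {c. p c > 0}"

definition sub_types :: "('s set \<Rightarrow> real) \<Rightarrow> 's set \<Rightarrow> 's set set" where
  "sub_types p Si = {c \<in> types p. c \<subseteq> Si}"

definition load :: "('s set \<Rightarrow> real) \<Rightarrow> 's set set \<Rightarrow> 's \<Rightarrow> real" where
  "load p Ci s = (\<Sum>c\<in>{c \<in> Ci. s \<in> c}. p c)"

definition ratio :: "('s \<Rightarrow> real) \<Rightarrow> ('s set \<Rightarrow> real) \<Rightarrow> 's set set \<Rightarrow> 's \<Rightarrow> ereal" where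
  "ratio mu p Ci s = (if load p Ci s = 0 then \<infinity> else ereal (mu s / load p Ci s))"

definition Lset :: "('s \<Rightarrow> real) \<Rightarrow> ('s set \<Rightarrow> real) \<Rightarrow> 's set \<Rightarrow> 's set" where
  "Lset mu p Si = {s \<in> Si. \<forall>s'\<in>Si. ratio mu p (sub_types p Si) s' \<le> ratio mu p (sub_types p Si) s}"

text \<open>Sstage mu p S i is S_{i+1} (index shifted by one): S_1 = S,
  S_{i+1} = S_i - L_i = S - (L_1 \<union> ... \<union> L_i).\<close>
primrec Sstage :: "('s \<Rightarrow> real) \<Rightarrow> ('s set \<Rightarrow> real) \<Rightarrow> 's set \<Rightarrow> nat \<Rightarrow> 's set" where
  "Sstage mu p S 0 = S"
| "Sstage mu p S (Suc i) = Sstage mu p S i - Lset mu p (Sstage mu p S i)"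

definition Rset :: "('s \<Rightarrow> real) \<Rightarrow> ('s set \<Rightarrow> real) \<Rightarrow> 's set \<Rightarrow> 's set \<Rightarrow> 's set" where
  "Rset mu p S c = {s. \<exists>i. c \<in> sub_types p (Sstage mu p S i) \<and> s \<in> c
                          \<and> s \<in> Lset mu p (Sstage mu p S i)}"

text \<open>Jobs are indexed globally by nat: arrival time arr i, type ctyp i, size sz i.
  a i s t is the service attained by the copy of job i at server s by time t.
  pres i t says whether job i is present in the system at time t.\<close>
definition copy_active ::
  "(nat \<Rightarrow> real \<Rightarrow> bool) \<Rightarrow> (nat \<Rightarrow> 's set) \<Rightarrow> (nat \<Rightarrow> real) \<Rightarrow> (nat \<Rightarrow> 's \<Rightarrow> real \<Rightarrow> real)
    \<Rightarrow> nat \<Rightarrow> 's \<Rightarrow> real \<Rightarrow> bool" where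
  "copy_active pres ctyp sz a i s t \<longleftrightarrow> pres i t \<and> s \<in> ctyp i \<and> a i s t < sz i"

definition ncopies ::
  "(nat \<Rightarrow> real \<Rightarrow> bool) \<Rightarrow> (nat \<Rightarrow> 's set) \<Rightarrow> (nat \<Rightarrow> real) \<Rightarrow> (nat \<Rightarrow> 's \<Rightarrow> real \<Rightarrow> real)
    \<Rightarrow> 's \<Rightarrow> real \<Rightarrow> nat" where
  "ncopies pres ctyp sz a s t = card {k. copy_active pres ctyp sz a k s t}"

definition srate ::
  "('s \<Rightarrow> real) \<Rightarrow> (nat \<Rightarrow> real \<Rightarrow> bool) \<Rightarrow> (nat \<Rightarrow> 's set) \<Rightarrow> (nat \<Rightarrow> real)
    \<Rightarrow> (nat \<Rightarrow> 's \<Rightarrow> real \<Rightarrow> real) \<Rightarrow> nat \<Rightarrow> 's \<Rightarrow> real \<Rightarrow> real" where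
  "srate mu pres ctyp sz a i s t =
     (if copy_active pres ctyp sz a i s t then mu s / real (ncopies pres ctyp sz a s t) else 0)"

definition ps_trajectory ::
  "('s \<Rightarrow> real) \<Rightarrow> (nat \<Rightarrow> real) \<Rightarrow> (nat \<Rightarrow> 's set) \<Rightarrow> (nat \<Rightarrow> real) \<Rightarrow> (nat \<Rightarrow> 's \<Rightarrow> real)
    \<Rightarrow> (nat \<Rightarrow> real \<Rightarrow> bool) \<Rightarrow> (nat \<Rightarrow> 's \<Rightarrow> real \<Rightarrow> real) \<Rightarrow> bool" where
  "ps_trajectory mu arr ctyp sz a0 pres a \<longleftrightarrow>
     (\<forall>i s t. s \<in> ctyp i \<longrightarrow> t \<le> arr i \<longrightarrow> a i s t = a0 i s) \<and>
     (\<forall>i s t. s \<in> ctyp i \<longrightarrow> arr i \<le> t \<longrightarrow>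
        (srate mu pres ctyp sz a i s has_integral (a i s t - a0 i s)) {arr i..t})"

definition pres_orig ::
  "(nat \<Rightarrow> real) \<Rightarrow> (nat \<Rightarrow> 's set) \<Rightarrow> (nat \<Rightarrow> real) \<Rightarrow> (nat \<Rightarrow> 's \<Rightarrow> real \<Rightarrow> real)
    \<Rightarrow> nat \<Rightarrow> real \<Rightarrow> bool" where
  "pres_orig arr ctyp sz a i t \<longleftrightarrow> arr i \<le> t \<and> (\<forall>s\<in>ctyp i. a i s t < sz i)"

definition pres_ub ::
  "('s set \<Rightarrow> 's set) \<Rightarrow> (nat \<Rightarrow> real) \<Rightarrow> (nat \<Rightarrow> 's set) \<Rightarrow> (nat \<Rightarrow> real)
    \<Rightarrow> (nat \<Rightarrow> 's \<Rightarrow> real \<Rightarrow> real) \<Rightarrow> nat \<Rightarrow> real \<Rightarrow> bool" where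
  "pres_ub R arr ctyp sz a i t \<longleftrightarrow> arr i \<le> t \<and> (\<exists>s\<in>R (ctyp i). a i s t < sz i)"

definition Ncount :: "(nat \<Rightarrow> real \<Rightarrow> bool) \<Rightarrow> (nat \<Rightarrow> 's set) \<Rightarrow> 's set \<Rightarrow> real \<Rightarrow> nat" where
  "Ncount pres ctyp c t = card {i. pres i t \<and> ctyp i = c}"

definition a_orig_conv ::
  "(nat \<Rightarrow> real) \<Rightarrow> (nat \<Rightarrow> 's set) \<Rightarrow> (nat \<Rightarrow> real) \<Rightarrow> (nat \<Rightarrow> 's \<Rightarrow> real \<Rightarrow> real)
    \<Rightarrow> nat \<Rightarrow> 's \<Rightarrow> real \<Rightarrow> real" where
  "a_orig_conv arr ctyp sz a i s t =
     (if arr i \<le> t \<and> \<not> pres_orig arr ctyp sz a i t then sz i else a i s t)"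

end

theory Submission
  imports Defs
begin

(*
  Let tau be the first time at which some copy of a job still present in the original
  system has received more service in the UB system than in the original one.  Before
  tau every job present in the original system is also present in the UB system with
  all of its copies unfinished there, because R(c) is a nonempty subset of c.  Hence
  every server holds at least as many copies in the UB system, and under processor
  sharing it serves each copy present in both systems at a rate that is no higher.
  Integrating the rates shows that the dominance persists for a while after tau,
  since no new job arrives and no UB copy completes immediately after tau.  The
  dominance therefore holds at all times, and it implies both inequalities.
*)

lemma Lset_subset: "Lset mu p Si \<subseteq> Si"
  by (auto simp: Lset_def)

lemma Lset_nonempty:
  assumes "finite Si" and "Si \<noteq> {}"
  shows "Lset mu p Si \<noteq> {}"
proof -
  let ?r = "ratio mu p (sub_types p Si)"
  have "Max (?r ` Si) \<in> ?r ` Si"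
    using assms by (intro Max_in) auto
  then obtain s where "s \<in> Si" and "?r s = Max (?r ` Si)"
    by auto
  then have "s \<in> Lset mu p Si"
    using assms by (auto simp: Lset_def)
  then show ?thesis by blast
qed

lemma Sstage_subset: "Sstage mu p S i \<subseteq> S"
  by (induction i) auto

lemma card_Sstage_le:
  assumes "finite S"
  shows "card (Sstage mu p S i) \<le> card S - i"
proof (induction i)
  case 0
  then show ?case by simp
next
  case (Suc i)
  let ?Si = "Sstage mu p S i"
  have fin: "finite ?Si"
    using finite_subset[OF Sstage_subset assms] .
  show ?case
  proof (cases "?Si = {}")
    case True
    then show ?thesis by simp
  next
    case False
    then have "?Si - Lset mu p ?Si \<subset> ?Si"
      using Lset_nonempty[OF fin, of mu p] Lset_subset[of mu p ?Si] by blast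
    then have "card (Sstage mu p S (Suc i)) < card ?Si"
      using psubset_card_mono[OF fin] by simp
    with Suc.IH show ?thesis by simp
  qed
qed

lemma Sstage_card_eq_empty:
  assumes "finite S"
  shows "Sstage mu p S (card S) = {}"
  using card_Sstage_le[OF assms, of mu p "card S"] finite_subset[OF Sstage_subset assms] by simp

lemma Rset_subset: "Rset mu p S c \<subseteq> c"
  by (auto simp: Rset_def)

lemma Rset_nonempty:
  assumes "finite S" and "c \<in> types p" and "c \<noteq> {}" and "c \<subseteq> S"
  shows "Rset mu p S c \<noteq> {}"
proof
  assume empty: "Rset mu p S c = {}"
  \<comment> \<open>then no server of c is ever removed, but the stages exhaust S\<close>
  have "c \<subseteq> Sstage mu p S i" for i
  proof (induction i)
    case 0
    then show ?case using assms(4) by simp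
  next
    case (Suc i)
    then have "c \<in> sub_types p (Sstage mu p S i)"
      using assms(2) by (simp add: sub_types_def)
    then have "c \<inter> Lset mu p (Sstage mu p S i) = {}"
      using empty by (auto simp: Rset_def)
    with Suc.IH show ?case by auto
  qed
  then show False
    using Sstage_card_eq_empty[OF assms(1)] assms(3) by blast
qed

lemma srate_nonneg:
  assumes "0 \<le> mu s"
  shows "0 \<le> srate mu pres ctyp sz a i s t"
  using assms by (simp add: srate_def)

lemma srate_le_capacity:
  assumes "0 \<le> mu s"
  shows "srate mu pres ctyp sz a i s t \<le> mu s"
proof -
  have "mu s / real n \<le> mu s" for n :: nat
    using assms by (cases "n = 0") (simp_all add: divide_le_eq mult_le_cancel_left1)
  then show ?thesis
    using assms by (simp add: srate_def)
qed

lemma srate_le_srate_if_copies_subset: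
  assumes "0 \<le> mu s" and active: "copy_active pres ctyp sz a i s t"
    and fin: "finite {k. copy_active pres' ctyp sz a' k s t}"
    and sub: "{k. copy_active pres ctyp sz a k s t} \<subseteq> {k. copy_active pres' ctyp sz a' k s t}"
  shows "srate mu pres' ctyp sz a' i s t \<le> srate mu pres ctyp sz a i s t"
proof (cases "copy_active pres' ctyp sz a' i s t")
  case True
  have "0 < ncopies pres ctyp sz a s t"
    using active finite_subset[OF sub fin] by (auto simp: ncopies_def card_gt_0_iff)
  moreover have "ncopies pres ctyp sz a s t \<le> ncopies pres' ctyp sz a' s t"
    unfolding ncopies_def using fin sub by (rule card_mono)
  ultimately show ?thesis
    using True active \<open>0 \<le> mu s\<close> by (simp add: srate_def divide_left_mono)
next
  case False
  then show ?thesis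
    using srate_nonneg[of mu s] \<open>0 \<le> mu s\<close> by (simp add: srate_def)
qed

lemma ps_trajectory_before_arrival:
  assumes "ps_trajectory mu arr ctyp sz a0 pres a" and "s \<in> ctyp i" and "t \<le> arr i"
  shows "a i s t = a0 i s"
  using assms unfolding ps_trajectory_def by blast

lemma ps_trajectory_at_max_arrival:
  assumes "ps_trajectory mu arr ctyp sz a0 pres a" and "s \<in> ctyp i"
  shows "a i s (max t (arr i)) = a i s t"
  using ps_trajectory_before_arrival[OF assms] by (cases "t \<le> arr i") (simp_all add: max_def)

lemma ps_trajectory_increment:
  assumes T: "ps_trajectory mu arr ctyp sz a0 pres a" and s: "s \<in> ctyp i"
    and "arr i \<le> t1" "t1 \<le> t2"
  shows "(srate mu pres ctyp sz a i s has_integral (a i s t2 - a i s t1)) {t1..t2}"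
proof -
  let ?f = "srate mu pres ctyp sz a i s"
  have I1: "(?f has_integral (a i s t1 - a0 i s)) {arr i..t1}"
    and I2: "(?f has_integral (a i s t2 - a0 i s)) {arr i..t2}"
    using T s assms(3,4) unfolding ps_trajectory_def by auto
  have "?f integrable_on {t1..t2}"
    by (rule integrable_subinterval_real[OF has_integral_integrable[OF I2]]) (use assms(3) in auto)
  then obtain j where J: "(?f has_integral j) {t1..t2}"
    by blast
  have "(?f has_integral (a i s t1 - a0 i s + j)) {arr i..t2}"
    by (rule has_integral_combine[OF _ _ I1 J]) (use assms(3,4) in auto)
  then have "a i s t2 - a0 i s = a i s t1 - a0 i s + j"
    by (rule has_integral_unique[OF I2])
  with J show ?thesis by simp
qed

lemma ps_trajectory_increment_bounds:
  assumes T: "ps_trajectory mu arr ctyp sz a0 pres a" and s: "s \<in> ctyp i"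
    and mu: "0 \<le> mu s" and t: "arr i \<le> t1" "t1 \<le> t2"
  shows "0 \<le> a i s t2 - a i s t1" and "a i s t2 - a i s t1 \<le> mu s * (t2 - t1)"
proof -
  note I = ps_trajectory_increment[OF T s t]
  show "0 \<le> a i s t2 - a i s t1"
    by (rule has_integral_nonneg[OF I]) (simp add: srate_nonneg mu)
  have "((\<lambda>_. mu s) has_integral mu s * (t2 - t1)) {t1..t2}"
    using has_integral_const_real[of "mu s" t1 t2] t by (simp add: mult.commute)
  then show "a i s t2 - a i s t1 \<le> mu s * (t2 - t1)"
    by (rule has_integral_le[OF I]) (simp add: srate_le_capacity mu)
qed

lemma ps_trajectory_mono:
  assumes T: "ps_trajectory mu arr ctyp sz a0 pres a" and s: "s \<in> ctyp i" and mu: "0 \<le> mu s"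
  shows "mono (a i s)"
proof
  fix t1 t2 :: real assume "t1 \<le> t2"
  then have "a i s (max t1 (arr i)) \<le> a i s (max t2 (arr i))"
    using ps_trajectory_increment_bounds(1)[OF T s mu] by simp
  then show "a i s t1 \<le> a i s t2"
    by (simp add: ps_trajectory_at_max_arrival[OF T s])
qed

lemma ps_trajectory_lipschitz:
  assumes T: "ps_trajectory mu arr ctyp sz a0 pres a" and s: "s \<in> ctyp i" and mu: "0 \<le> mu s"
  shows "(mu s)-lipschitz_on X (a i s)"
proof (rule lipschitz_onI[OF _ mu])
  have le: "a i s t2 - a i s t1 \<le> mu s * (t2 - t1)" if "t1 \<le> t2" for t1 t2
  proof -
    let ?m1 = "max t1 (arr i)" and ?m2 = "max t2 (arr i)"
    have "a i s ?m2 - a i s ?m1 \<le> mu s * (?m2 - ?m1)"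
      using ps_trajectory_increment_bounds(2)[OF T s mu] that by simp
    also have "\<dots> \<le> mu s * (t2 - t1)"
      using that mu by (intro mult_left_mono) auto
    finally show ?thesis
      by (simp add: ps_trajectory_at_max_arrival[OF T s])
  qed
  have mono: "mono (a i s)"
    by (rule ps_trajectory_mono[OF T s mu])
  fix x y :: real
  show "dist (a i s x) (a i s y) \<le> mu s * dist x y"
  proof (cases "x \<le> y")
    case True
    then show ?thesis
      using le[of x y] monoD[OF mono True] by (simp add: dist_real_def)
  next
    case False
    then have "y \<le> x" by simp
    then show ?thesis
      using le[of y x] monoD[OF mono \<open>y \<le> x\<close>] by (simp add: dist_real_def)
  qed
qed

lemma ps_trajectory_continuous:
  assumes "ps_trajectory mu arr ctyp sz a0 pres a" and "s \<in> ctyp i" and "0 \<le> mu s"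
  shows "continuous_on X (a i s)"
  using lipschitz_on_continuous_on[OF ps_trajectory_lipschitz[OF assms]] .

lemma ps_trajectory_le_size:
  assumes T: "ps_trajectory mu arr ctyp sz a0 pres a" and s: "s \<in> ctyp i" and mu: "0 \<le> mu s"
    and a0: "a0 i s < sz i"
  shows "a i s t \<le> sz i"
proof (rule ccontr)
  assume "\<not> a i s t \<le> sz i"
  then have exceed: "sz i < a i s t" by simp
  have start: "a i s (arr i) < sz i"
    using ps_trajectory_before_arrival[OF T s] a0 by simp
  have "arr i \<le> t"
    using exceed start ps_trajectory_at_max_arrival[OF T s, of t] by (cases "t \<le> arr i") auto
  then have "\<exists>t0\<ge>arr i. t0 \<le> t \<and> a i s t0 = sz i"
    using start exceed by (intro IVT' ps_trajectory_continuous[OF T s mu]) auto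
  then obtain t0 where t0: "arr i \<le> t0" "t0 \<le> t" "a i s t0 = sz i"
    by blast
  \<comment> \<open>once the copy is complete it is no longer served\<close>
  have "srate mu pres ctyp sz a i s w \<le> 0" if "w \<in> {t0..t}" for w
    using monoD[OF ps_trajectory_mono[OF T s mu], of t0 w] that t0(3)
    by (simp add: srate_def copy_active_def)
  then have "a i s t - a i s t0 \<le> 0"
    using has_integral_le[OF ps_trajectory_increment[OF T s t0(1,2)] has_integral_0] by blast
  with t0(3) exceed show False by simp
qed

lemma real_continuous_induction:
  fixes P :: "real \<Rightarrow> bool"
  assumes below: "\<And>t. t < t0 \<Longrightarrow> P t"
    and closed: "\<And>\<tau>. (\<And>t. t < \<tau> \<Longrightarrow> P t) \<Longrightarrow> P \<tau>"
    and extend: "\<And>\<tau>. (\<And>t. t \<le> \<tau> \<Longrightarrow> P t) \<Longrightarrow> eventually P (at_right \<tau>)"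
  shows "P t"
proof (rule ccontr)
  define V where "V = {t. \<not> P t}"
  assume "\<not> P t"
  then have "V \<noteq> {}" by (auto simp: V_def)
  have "bdd_below V"
    using below by (force simp: V_def bdd_below_def not_less)
  define \<tau> where "\<tau> = Inf V"
  have "P t" if "t < \<tau>" for t
    using cInf_lower[OF _ \<open>bdd_below V\<close>, of t] that by (force simp: V_def \<tau>_def)
  then have upto: "P t" if "t \<le> \<tau>" for t
    using closed that by (cases "t < \<tau>") auto
  obtain b where "\<tau> < b" and after: "\<And>u. \<tau> < u \<Longrightarrow> u < b \<Longrightarrow> P u"
    using extend[OF upto] by (auto simp: eventually_at_right_field)
  have "b \<le> x" if "x \<in> V" for x
    using that upto[of x] after[of x] by (force simp: V_def)
  then have "b \<le> \<tau>"
    unfolding \<tau>_def using \<open>V \<noteq> {}\<close> by (rule cInf_greatest[rotated])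
  with \<open>\<tau> < b\<close> show False by simp
qed

lemma eventually_no_arrivals_at_right:
  fixes arr :: "'i \<Rightarrow> real"
  assumes "finite {i. arr i \<le> \<tau> + 1}"
  shows "eventually (\<lambda>u. \<forall>i. arr i \<le> u \<longrightarrow> arr i \<le> \<tau>) (at_right \<tau>)"
proof -
  let ?A = "{i. arr i \<le> \<tau> + 1}"
  have "eventually (\<lambda>u. arr i \<le> u \<longrightarrow> arr i \<le> \<tau>) (at_right \<tau>)" for i
  proof (cases "arr i \<le> \<tau>")
    case False
    then show ?thesis
      by (intro eventually_at_rightI[where b = "arr i"]) auto
  qed simp
  then have "eventually (\<lambda>u. \<forall>i\<in>?A. arr i \<le> u \<longrightarrow> arr i \<le> \<tau>) (at_right \<tau>)"
    using assms by (intro eventually_ball_finite) auto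
  moreover have "eventually (\<lambda>u. u < \<tau> + 1) (at_right \<tau>)"
    by (intro eventually_at_rightI[where b = "\<tau> + 1"]) auto
  ultimately show ?thesis
    by eventually_elim force
qed

locale redundancy_coupling =
  fixes mu :: "'s \<Rightarrow> real" and arr :: "nat \<Rightarrow> real" and ctyp :: "nat \<Rightarrow> 's set"
    and sz :: "nat \<Rightarrow> real" and a0 :: "nat \<Rightarrow> 's \<Rightarrow> real" and R :: "'s set \<Rightarrow> 's set"
    and aO aU :: "nat \<Rightarrow> 's \<Rightarrow> real \<Rightarrow> real"
  assumes mu_nonneg: "\<And>i s. s \<in> ctyp i \<Longrightarrow> 0 \<le> mu s"
    and finite_ctyp: "\<And>i. finite (ctyp i)"
    and R_nonempty: "\<And>i. R (ctyp i) \<noteq> {}"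
    and R_subset: "\<And>i. R (ctyp i) \<subseteq> ctyp i"
    and arr_nonneg: "\<And>i. 0 \<le> arr i"
    and finite_arrivals: "\<And>T. finite {i. arr i \<le> T}"
    and traj_orig: "ps_trajectory mu arr ctyp sz a0 (pres_orig arr ctyp sz aO) aO"
    and traj_ub: "ps_trajectory mu arr ctyp sz a0 (pres_ub R arr ctyp sz aU) aU"
begin

abbreviation orig_present :: "nat \<Rightarrow> real \<Rightarrow> bool" where
  "orig_present \<equiv> pres_orig arr ctyp sz aO"

abbreviation ub_present :: "nat \<Rightarrow> real \<Rightarrow> bool" where
  "ub_present \<equiv> pres_ub R arr ctyp sz aU"

definition dominated :: "real \<Rightarrow> bool" where
  "dominated t \<longleftrightarrow> (\<forall>i s. orig_present i t \<longrightarrow> s \<in> ctyp i \<longrightarrow> aU i s t \<le> aO i s t)"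

definition ub_unfinished :: "real \<Rightarrow> bool" where
  "ub_unfinished t \<longleftrightarrow> (\<forall>i s. orig_present i t \<longrightarrow> s \<in> ctyp i \<longrightarrow> aU i s t < sz i)"

lemma orig_present_antimono:
  assumes "orig_present i t2" and "arr i \<le> t1" and "t1 \<le> t2"
  shows "orig_present i t1"
proof -
  have "aO i s t1 < sz i" if s: "s \<in> ctyp i" for s
    using monoD[OF ps_trajectory_mono[OF traj_orig s mu_nonneg[OF s]] assms(3)] assms(1) s
    by (fastforce simp: pres_orig_def)
  with assms(2) show ?thesis
    by (simp add: pres_orig_def)
qed

lemma ub_unfinished_if_dominated: "dominated t \<Longrightarrow> ub_unfinished t"
  by (fastforce simp: dominated_def ub_unfinished_def pres_orig_def)

lemma ub_present_if_unfinished: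
  assumes "orig_present i t" and "\<And>s. s \<in> ctyp i \<Longrightarrow> aU i s t < sz i"
  shows "ub_present i t"
proof -
  obtain r where "r \<in> R (ctyp i)"
    using R_nonempty by blast
  with assms show ?thesis
    using R_subset by (force simp: pres_ub_def pres_orig_def)
qed

lemma srate_ub_le_srate_orig:
  assumes unfinished: "ub_unfinished t" and present: "orig_present i t" and s: "s \<in> ctyp i"
  shows "srate mu ub_present ctyp sz aU i s t \<le> srate mu orig_present ctyp sz aO i s t"
proof (rule srate_le_srate_if_copies_subset[where mu = mu and s = s, OF mu_nonneg[OF s]])
  show "copy_active orig_present ctyp sz aO i s t"
    using present s by (simp add: copy_active_def pres_orig_def)
  show "finite {k. copy_active ub_present ctyp sz aU k s t}"
    by (rule finite_subset[OF _ finite_arrivals[of t]]) (auto simp: copy_active_def pres_ub_def)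
  show "{k. copy_active orig_present ctyp sz aO k s t} \<subseteq> {k. copy_active ub_present ctyp sz aU k s t}"
    using unfinished ub_present_if_unfinished by (auto simp: copy_active_def ub_unfinished_def)
qed

lemma ub_increment_le_orig_increment:
  assumes s: "s \<in> ctyp i" and t: "arr i \<le> t1" "t1 \<le> t2" and present: "orig_present i t2"
    and unfinished: "\<And>w. w \<in> {t1..t2} \<Longrightarrow> ub_unfinished w"
  shows "aU i s t2 - aU i s t1 \<le> aO i s t2 - aO i s t1"
proof (rule has_integral_le[OF ps_trajectory_increment[OF traj_ub s t]
      ps_trajectory_increment[OF traj_orig s t]])
  fix w assume w: "w \<in> {t1..t2}"
  then have "orig_present i w"
    using orig_present_antimono[OF present] t by auto
  with w show "srate mu ub_present ctyp sz aU i s w \<le> srate mu orig_present ctyp sz aO i s w"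
    using srate_ub_le_srate_orig unfinished s by blast
qed

lemma dominated_before_arrivals:
  assumes "t < 0"
  shows "dominated t"
proof -
  have "\<not> orig_present i t" for i
    using arr_nonneg[of i] assms by (simp add: pres_orig_def)
  then show ?thesis
    by (simp add: dominated_def)
qed

lemma dominated_if_dominated_before:
  assumes before: "\<And>t. t < \<tau> \<Longrightarrow> dominated t"
  shows "dominated \<tau>"
  unfolding dominated_def
proof (intro allI impI)
  fix i s assume present: "orig_present i \<tau>" and s: "s \<in> ctyp i"
  show "aU i s \<tau> \<le> aO i s \<tau>"
  proof (cases "arr i = \<tau>")
    case True
    then show ?thesis
      using ps_trajectory_before_arrival[OF traj_orig s] ps_trajectory_before_arrival[OF traj_ub s]
      by simp
  next
    case False
    with present have "arr i < \<tau>"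
      by (simp add: pres_orig_def)
    let ?f = "\<lambda>t. aO i s t - aU i s t"
    have "continuous_on (closure {arr i..<\<tau>}) ?f"
      using ps_trajectory_continuous[OF traj_orig s] ps_trajectory_continuous[OF traj_ub s]
        mu_nonneg[OF s] by (intro continuous_on_diff) auto
    moreover have "\<tau> \<in> closure {arr i..<\<tau>}"
      using \<open>arr i < \<tau>\<close> by simp
    moreover have "0 \<le> ?f t" if "t \<in> {arr i..<\<tau>}" for t
      using before[of t] orig_present_antimono[OF present, of t] that s
      by (auto simp: dominated_def)
    ultimately have "0 \<le> ?f \<tau>"
      by (rule continuous_ge_on_closure)
    then show ?thesis by simp
  qed
qed

lemma eventually_ub_unfinished_at_right:
  assumes unfinished: "ub_unfinished \<tau>"
  shows "eventually ub_unfinished (at_right \<tau>)"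
proof -
  let ?B = "Sigma {k. orig_present k \<tau>} ctyp"
  have "finite ?B"
    by (rule finite_SigmaI[OF finite_subset[OF _ finite_arrivals[of \<tau>]] finite_ctyp])
      (auto simp: pres_orig_def)
  moreover have "eventually (\<lambda>u. aU k s u < sz k) (at_right \<tau>)" if "(k, s) \<in> ?B" for k s
  proof (rule order_tendstoD(2))
    have "continuous_on UNIV (aU k s)"
      using ps_trajectory_continuous[OF traj_ub _ mu_nonneg] that by blast
    then show "(aU k s \<longlongrightarrow> aU k s \<tau>) (at_right \<tau>)"
      by (simp add: continuous_on_def filterlim_at_split)
    show "aU k s \<tau> < sz k"
      using unfinished that by (simp add: ub_unfinished_def)
  qed
  ultimately have "eventually (\<lambda>u. \<forall>(k, s)\<in>?B. aU k s u < sz k) (at_right \<tau>)"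
    by (intro eventually_ball_finite) auto
  with eventually_at_right_less[of \<tau>] eventually_no_arrivals_at_right[OF finite_arrivals]
  show ?thesis
  proof eventually_elim
    case (elim u)
    show "ub_unfinished u"
      unfolding ub_unfinished_def
    proof (intro allI impI)
      fix k s assume present: "orig_present k u" and s: "s \<in> ctyp k"
      then have "orig_present k \<tau>"
        using elim orig_present_antimono[OF present] by (auto simp: pres_orig_def)
      with elim(3) s show "aU k s u < sz k"
        by auto
    qed
  qed
qed

lemma eventually_dominated_at_right:
  assumes dom: "dominated \<tau>"
  shows "eventually dominated (at_right \<tau>)"
proof -
  have "eventually (\<lambda>u. ub_unfinished u \<and> (\<forall>k. arr k \<le> u \<longrightarrow> arr k \<le> \<tau>)) (at_right \<tau>)"
    using eventually_ub_unfinished_at_right[OF ub_unfinished_if_dominated[OF dom]]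
      eventually_no_arrivals_at_right[OF finite_arrivals]
    by (rule eventually_conj)
  then obtain b where "\<tau> < b"
    and b: "\<And>u. \<tau> < u \<Longrightarrow> u < b \<Longrightarrow> ub_unfinished u \<and> (\<forall>k. arr k \<le> u \<longrightarrow> arr k \<le> \<tau>)"
    by (auto simp: eventually_at_right_field)
  have "dominated u" if u: "\<tau> < u" "u < b" for u
    unfolding dominated_def
  proof (intro allI impI)
    fix i s assume present: "orig_present i u" and s: "s \<in> ctyp i"
    have "arr i \<le> \<tau>"
      using b[OF u] present by (simp add: pres_orig_def)
    then have "aU i s \<tau> \<le> aO i s \<tau>"
      using dom orig_present_antimono[OF present] u s by (simp add: dominated_def)
    moreover have "aU i s u - aU i s \<tau> \<le> aO i s u - aO i s \<tau>"
    proof (rule ub_increment_le_orig_increment[OF s \<open>arr i \<le> \<tau>\<close> _ present])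
      show "\<tau> \<le> u" using u by simp
      fix w assume "w \<in> {\<tau>..u}"
      then show "ub_unfinished w"
        using b[of w] u ub_unfinished_if_dominated[OF dom] by (cases "w = \<tau>") auto
    qed
    ultimately show "aU i s u \<le> aO i s u"
      by simp
  qed
  with \<open>\<tau> < b\<close> show ?thesis
    by (intro eventually_at_rightI[where b = b]) auto
qed

lemma dominated_always: "dominated t"
proof (rule real_continuous_induction)
  show "dominated t" if "t < 0" for t
    using that by (rule dominated_before_arrivals)
  show "dominated \<tau>" if "\<And>t. t < \<tau> \<Longrightarrow> dominated t" for \<tau>
    using that by (rule dominated_if_dominated_before)
  show "eventually dominated (at_right \<tau>)" if "\<And>t. t \<le> \<tau> \<Longrightarrow> dominated t" for \<tau>
    using that[of \<tau>] by (intro eventually_dominated_at_right) simp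
qed

lemma ub_present_if_orig_present: "orig_present i t \<Longrightarrow> ub_present i t"
  using ub_present_if_unfinished ub_unfinished_if_dominated[OF dominated_always]
  by (simp add: ub_unfinished_def)

lemma Ncount_orig_le_Ncount_ub: "Ncount orig_present ctyp c t \<le> Ncount ub_present ctyp c t"
  unfolding Ncount_def
proof (rule card_mono)
  show "finite {i. ub_present i t \<and> ctyp i = c}"
    by (rule finite_subset[OF _ finite_arrivals[of t]]) (auto simp: pres_ub_def)
  show "{i. orig_present i t \<and> ctyp i = c} \<subseteq> {i. ub_present i t \<and> ctyp i = c}"
    using ub_present_if_orig_present by blast
qed

lemma ub_service_le_orig_service:
  assumes "ub_present i t" and s: "s \<in> ctyp i" and "a0 i s < sz i"
  shows "aU i s t \<le> a_orig_conv arr ctyp sz aO i s t"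
proof (cases "orig_present i t")
  case True
  then show ?thesis
    using dominated_always s by (simp add: dominated_def a_orig_conv_def)
next
  case False
  then show ?thesis
    using assms ps_trajectory_le_size[OF traj_ub s mu_nonneg[OF s]]
    by (simp add: a_orig_conv_def pres_ub_def)
qed

end

theorem proposition3:
  fixes S :: "'s set" and mu :: "'s \<Rightarrow> real" and p :: "'s set \<Rightarrow> real"
    and arr :: "nat \<Rightarrow> real" and ctyp :: "nat \<Rightarrow> 's set" and sz :: "nat \<Rightarrow> real"
    and a0 :: "nat \<Rightarrow> 's \<Rightarrow> real"
    and aO aU :: "nat \<Rightarrow> 's \<Rightarrow> real \<Rightarrow> real"
  assumes "finite S" and "S \<noteq> {}"
    and "\<forall>s\<in>S. mu s > 0"
    and "\<forall>c. p c \<ge> 0"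
    and "\<forall>c. p c > 0 \<longrightarrow> c \<noteq> {} \<and> c \<subseteq> S"
    and "(\<Sum>c\<in>Pow S. p c) = 1"
    and "\<forall>i. arr i \<ge> 0"
    and "\<forall>T. finite {i. arr i \<le> T}"
    and "\<forall>i. ctyp i \<in> types p"
    and "\<forall>i. sz i > 0"
    and "\<forall>i s. s \<in> ctyp i \<longrightarrow> 0 \<le> a0 i s \<and> a0 i s < sz i"
    and "\<forall>i s. arr i > 0 \<longrightarrow> a0 i s = 0"
    and "ps_trajectory mu arr ctyp sz a0 (pres_orig arr ctyp sz aO) aO"
    and "ps_trajectory mu arr ctyp sz a0 (pres_ub (Rset mu p S) arr ctyp sz aU) aU"
  shows "(\<forall>c t. 0 \<le> t \<longrightarrow>
            Ncount (pres_orig arr ctyp sz aO) ctyp c t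
              \<le> Ncount (pres_ub (Rset mu p S) arr ctyp sz aU) ctyp c t)
       \<and> (\<forall>i s t. 0 \<le> t \<longrightarrow> s \<in> ctyp i \<longrightarrow> pres_ub (Rset mu p S) arr ctyp sz aU i t \<longrightarrow>
            aU i s t \<le> a_orig_conv arr ctyp sz aO i s t)"
proof -
  have ctyp_subset: "ctyp i \<subseteq> S" and ctyp_nonempty: "ctyp i \<noteq> {}" for i
    using assms(5,9) by (auto simp: types_def)
  interpret redundancy_coupling mu arr ctyp sz a0 "Rset mu p S" aO aU
  proof
    show "0 \<le> mu s" if "s \<in> ctyp i" for i s
      using assms(3) ctyp_subset that by (auto intro: less_imp_le)
    show "finite (ctyp i)" for i
      using finite_subset[OF ctyp_subset assms(1)] .
    show "Rset mu p S (ctyp i) \<noteq> {}" for i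
      using Rset_nonempty[OF assms(1) assms(9)[rule_format] ctyp_nonempty ctyp_subset] .
    show "Rset mu p S (ctyp i) \<subseteq> ctyp i" for i
      by (rule Rset_subset)
  qed (use assms(7,8,13,14) in auto)
  show ?thesis
    using Ncount_orig_le_Ncount_ub ub_service_le_orig_service assms(11) by blast
qed

end
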